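(* Let $n,n'\in\mathbb{N}$ and let $\phi:\mathbb{N}^n\to\mathbb{N}^{n'}$ be a map that preserves joins and meets, i.e. $\phi(a\vee b)=\phi(a)\vee\phi(b)$ and $\phi(a\wedge b)=\phi(a)\wedge\phi(b)$ for all $a,b\in\mathbb{N}^n$. Then $\phi$ changes the Stanley depth by $n-n'$ with respect to any $g\in\mathbb{N}^n$ and $g':=\phi(g)$.
   Context: $\mathbb{N}^n$ carries the componentwise partial order, with $\vee$ and $\wedge$ the componentwise maximum and minimum; $[a,b]=\{c: a\le c\le b\}$; a map is monotonic if it preserves this order. A monotonic map $\phi:\mathbb{N}^n\to\mathbb{N}^{n'}$ changes the Stanley depth by $\ell\in\mathbb{Z}$ with respect to $g\in\mathbb{N}^n$ and $g'\in\mathbb{N}^{n'}$ if (1) $\phi(g)\le g'$, and (2) for every interval $[a',b']\subset[0,g']$, the set $\phi^{-1}([a',b'])\cap[0,g]$ is a finite disjoint union $\bigcup_i[a^i,b^i]$ of intervals with $\#\{j\in[n]: b^i_j=g_j\}\ge\#\{j\in[n']: b'_j=g'_j\}+\ell$ for all $i$. *)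

theory Defs
  imports Main
begin

text \<open>Elements of N^n are modelled as functions nat => nat that vanish at all indices >= n.
  The order, join and meet are the pointwise ones on nat => nat (le_fun, sup, inf).\<close>

definition NN :: "nat \<Rightarrow> (nat \<Rightarrow> nat) set" where
  "NN n = {a. \<forall>i\<ge>n. a i = 0}"

definition intv :: "nat \<Rightarrow> (nat \<Rightarrow> nat) \<Rightarrow> (nat \<Rightarrow> nat) \<Rightarrow> (nat \<Rightarrow> nat) set" where
  "intv n a b = {c \<in> NN n. a \<le> c \<and> c \<le> b}"

definition nmax :: "nat \<Rightarrow> (nat \<Rightarrow> nat) \<Rightarrow> (nat \<Rightarrow> nat) \<Rightarrow> nat" where
  "nmax n b g = card {j. j < n \<and> b j = g j}"

definition changes_sdepth ::
  "nat \<Rightarrow> nat \<Rightarrow> ((nat \<Rightarrow> nat) \<Rightarrow> (nat \<Rightarrow> nat)) \<Rightarrow> int \<Rightarrow> (nat \<Rightarrow> nat) \<Rightarrow> (nat \<Rightarrow> nat) \<Rightarrow> bool" where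
  "changes_sdepth n n' \<phi> l g g' \<longleftrightarrow>
     \<phi> g \<le> g' \<and>
     (\<forall>a' \<in> NN n'. \<forall>b' \<in> NN n'. intv n' a' b' \<subseteq> intv n' (\<lambda>_. 0) g' \<longrightarrow>
        (\<exists>D :: ((nat \<Rightarrow> nat) \<times> (nat \<Rightarrow> nat)) set.
           finite D \<and>
           (\<forall>(a,b) \<in> D. a \<in> NN n \<and> b \<in> NN n \<and> a \<le> b) \<and>
           (\<forall>p \<in> D. \<forall>q \<in> D. p \<noteq> q \<longrightarrow> intv n (fst p) (snd p) \<inter> intv n (fst q) (snd q) = {}) \<and>
           {c \<in> intv n (\<lambda>_. 0) g. \<phi> c \<in> intv n' a' b'} = (\<Union>(a,b) \<in> D. intv n a b) \<and>
           (\<forall>(a,b) \<in> D. int (nmax n b g) \<ge> int (nmax n' b' g') + l)))"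

end

theory Submission
  imports Defs
begin

text \<open>The preimage P of a box [a',b'] under \<phi>, intersected with [0,g], is closed under joins and meets and,
  \<phi> being monotone, order-convex; being finite it is therefore a single interval [Inf P, Sup P].
  For the Stanley depth bound, let m = Sup P. Each free coordinate i of m (where m i < g i) can be
  raised by one, leaving P; the raised point is mapped above b' in some coordinate h i < n', which is
  free for b' below \<phi> g. Since any two raised points meet in m, and \<phi> preserves meets, h is injective,
  so m has at most as many free coordinates as b'.\<close>

lemma sup_closed_Sup_fin_mem:
  fixes A B :: "'a::lattice set"
  assumes "finite B" "B \<noteq> {}" "B \<subseteq> A" and closed: "\<And>x y. x \<in> A \<Longrightarrow> y \<in> A \<Longrightarrow> sup x y \<in> A"
  shows "Sup_fin B \<in> A"
  using assms(1-3) by (induction rule: finite_ne_induct) (auto intro: closed)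

lemma inf_closed_Inf_fin_mem:
  fixes A B :: "'a::lattice set"
  assumes "finite B" "B \<noteq> {}" "B \<subseteq> A" and closed: "\<And>x y. x \<in> A \<Longrightarrow> y \<in> A \<Longrightarrow> inf x y \<in> A"
  shows "Inf_fin B \<in> A"
  using assms(1-3) by (induction rule: finite_ne_induct) (auto intro: closed)

lemma card_lessThan_split: "card {j. j < n \<and> P j} + card {j. j < n \<and> \<not> P j} = n"
proof -
  have "card {j. j < n \<and> P j} + card {j. j < n \<and> \<not> P j}
      = card ({j. j < n \<and> P j} \<union> {j. j < n \<and> \<not> P j})"
    by (rule card_Un_disjoint[symmetric]) auto
  also have "{j. j < n \<and> P j} \<union> {j. j < n \<and> \<not> P j} = {..<n}" by auto
  finally show ?thesis by simp
qed

lemma nmax_add_card_neq: "nmax n b g + card {j. j < n \<and> b j \<noteq> g j} = n"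
  unfolding nmax_def by (rule card_lessThan_split)

lemma zero_fun_le [simp]: "(\<lambda>_. 0 :: nat) \<le> f"
  by (simp add: le_fun_def)

lemma sup_NN: "a \<in> NN n \<Longrightarrow> b \<in> NN n \<Longrightarrow> sup a b \<in> NN n"
  by (simp add: NN_def)

lemma inf_NN: "a \<in> NN n \<Longrightarrow> b \<in> NN n \<Longrightarrow> inf a b \<in> NN n"
  by (simp add: NN_def)

lemma finite_intv: "finite (intv n a b)"
proof (rule finite_subset)
  show "intv n a b \<subseteq> {f. \<forall>i. (i \<in> {..<n} \<longrightarrow> f i \<in> {..(\<Sum>k<n. b k)}) \<and> (i \<notin> {..<n} \<longrightarrow> f i = 0)}"
    by (auto simp: intv_def NN_def le_fun_def intro: order_trans[OF _ member_le_sum])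
qed (intro finite_set_of_finite_funs; simp)

lemma not_le_NN_witness:
  assumes "x \<in> NN n" "\<not> x \<le> b"
  obtains j where "j < n" "b j < x j"
proof -
  from assms(2) obtain j where "b j < x j" by (auto simp: le_fun_def not_le)
  moreover from this assms(1) have "j < n" by (auto simp: NN_def intro: ccontr)
  ultimately show thesis by (rule that[rotated])
qed

locale lattice_hom_NN =
  fixes n n' :: nat and \<phi> :: "(nat \<Rightarrow> nat) \<Rightarrow> (nat \<Rightarrow> nat)"
  assumes maps: "\<And>a. a \<in> NN n \<Longrightarrow> \<phi> a \<in> NN n'"
    and join: "\<And>a b. a \<in> NN n \<Longrightarrow> b \<in> NN n \<Longrightarrow> \<phi> (sup a b) = sup (\<phi> a) (\<phi> b)"
    and meet: "\<And>a b. a \<in> NN n \<Longrightarrow> b \<in> NN n \<Longrightarrow> \<phi> (inf a b) = inf (\<phi> a) (\<phi> b)"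
begin

lemma mono: "c \<in> NN n \<Longrightarrow> d \<in> NN n \<Longrightarrow> c \<le> d \<Longrightarrow> \<phi> c \<le> \<phi> d"
  by (metis join sup.absorb2 sup.cobounded1)

definition box_preimage :: "(nat \<Rightarrow> nat) \<Rightarrow> (nat \<Rightarrow> nat) \<Rightarrow> (nat \<Rightarrow> nat) \<Rightarrow> (nat \<Rightarrow> nat) set" where
  "box_preimage g a' b' = {c \<in> intv n (\<lambda>_. 0) g. \<phi> c \<in> intv n' a' b'}"

lemma finite_box_preimage: "finite (box_preimage g a' b')"
  unfolding box_preimage_def using finite_intv by simp

lemma box_preimage_sup_closed:
  "c \<in> box_preimage g a' b' \<Longrightarrow> d \<in> box_preimage g a' b' \<Longrightarrow> sup c d \<in> box_preimage g a' b'"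
  by (auto simp: box_preimage_def intv_def join sup_NN maps le_supI1)

lemma box_preimage_inf_closed:
  "c \<in> box_preimage g a' b' \<Longrightarrow> d \<in> box_preimage g a' b' \<Longrightarrow> inf c d \<in> box_preimage g a' b'"
  by (auto simp: box_preimage_def intv_def meet inf_NN maps le_infI1)

lemma box_preimage_convex:
  assumes "l \<in> box_preimage g a' b'" "u \<in> box_preimage g a' b'"
  shows "intv n l u \<subseteq> box_preimage g a' b'"
proof
  fix c assume c: "c \<in> intv n l u"
  have l: "l \<in> NN n" "a' \<le> \<phi> l" and u: "u \<in> NN n" "u \<le> g" "\<phi> u \<le> b'"
    using assms by (auto simp: box_preimage_def intv_def)
  from c have "c \<in> NN n" "l \<le> c" "c \<le> u" by (auto simp: intv_def)
  with l u have "a' \<le> \<phi> c" "\<phi> c \<le> b'" "c \<le> g"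
    by (auto intro: order_trans mono)
  with \<open>c \<in> NN n\<close> show "c \<in> box_preimage g a' b'"
    by (auto simp: box_preimage_def intv_def maps)
qed

lemma Inf_fin_box_preimage_mem:
  "box_preimage g a' b' \<noteq> {} \<Longrightarrow> Inf_fin (box_preimage g a' b') \<in> box_preimage g a' b'"
  by (rule inf_closed_Inf_fin_mem[OF finite_box_preimage _ subset_refl box_preimage_inf_closed])

lemma Sup_fin_box_preimage_mem:
  "box_preimage g a' b' \<noteq> {} \<Longrightarrow> Sup_fin (box_preimage g a' b') \<in> box_preimage g a' b'"
  by (rule sup_closed_Sup_fin_mem[OF finite_box_preimage _ subset_refl box_preimage_sup_closed])

lemma box_preimage_eq_intv:
  assumes "box_preimage g a' b' \<noteq> {}"
  shows "box_preimage g a' b' = intv n (Inf_fin (box_preimage g a' b')) (Sup_fin (box_preimage g a' b'))"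
    (is "?P = intv n ?l ?u")
proof
  from Inf_fin_box_preimage_mem[OF assms] Sup_fin_box_preimage_mem[OF assms]
  show "intv n ?l ?u \<subseteq> ?P" by (rule box_preimage_convex)
  show "?P \<subseteq> intv n ?l ?u"
  proof
    fix c assume c: "c \<in> ?P"
    then have "c \<in> NN n" by (simp add: box_preimage_def intv_def)
    moreover have "?l \<le> c" "c \<le> ?u"
      using finite_box_preimage c by (rule Inf_fin.coboundedI, rule Sup_fin.coboundedI)
    ultimately show "c \<in> intv n ?l ?u" by (simp add: intv_def)
  qed
qed

lemma card_free_coords_le:
  assumes g: "g \<in> NN n" and m: "m \<in> box_preimage g a' b'"
    and greatest: "\<And>c. c \<in> box_preimage g a' b' \<Longrightarrow> c \<le> m"
  shows "card {i. i < n \<and> m i \<noteq> g i} \<le> card {j. j < n' \<and> b' j \<noteq> \<phi> g j}"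
    (is "card ?S \<le> card ?T")
proof -
  define e where "e i = m(i := Suc (m i))" for i
  have mN: "m \<in> NN n" and mg: "m \<le> g" and am: "a' \<le> \<phi> m" and mb: "\<phi> m \<le> b'"
    using m by (auto simp: box_preimage_def intv_def)
  have eN: "e i \<in> NN n" and eg: "e i \<le> g" if "i \<in> ?S" for i
    using that mN mg by (auto simp: e_def NN_def le_fun_def le_less dest: spec[of _ i])
  have escapes: "\<exists>j < n'. b' j < \<phi> (e i) j \<and> b' j < \<phi> g j" if i: "i \<in> ?S" for i
  proof -
    have "m \<le> e i" by (simp add: e_def le_fun_def)
    then have "a' \<le> \<phi> (e i)" by (rule order.trans[OF am mono[OF mN eN[OF i]]])
    moreover have "\<not> e i \<le> m" by (auto simp: e_def le_fun_def dest: spec[of _ i])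
    then have "e i \<notin> box_preimage g a' b'" using greatest by blast
    ultimately have "\<not> \<phi> (e i) \<le> b'"
      using eN[OF i] eg[OF i] by (auto simp: box_preimage_def intv_def maps)
    then obtain j where "j < n'" "b' j < \<phi> (e i) j"
      by (rule not_le_NN_witness[OF maps[OF eN[OF i]]])
    moreover have "\<phi> (e i) \<le> \<phi> g"
      using mono eN[OF i] g eg[OF i] by blast
    ultimately show ?thesis by (meson le_funD order.strict_trans2)
  qed
  then obtain h where h: "\<And>i. i \<in> ?S \<Longrightarrow> h i < n' \<and> b' (h i) < \<phi> (e i) (h i) \<and> b' (h i) < \<phi> g (h i)"
    by metis
  have "inj_on h ?S"
  proof (rule inj_onI, rule ccontr)
    fix i1 i2 assume i: "i1 \<in> ?S" "i2 \<in> ?S" and eq: "h i1 = h i2" and ne: "i1 \<noteq> i2"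
    have "inf (e i1) (e i2) = m" using ne by (auto simp: e_def fun_eq_iff inf_nat_def)
    then have "\<phi> m = inf (\<phi> (e i1)) (\<phi> (e i2))" using meet eN i by metis
    then have "\<phi> m (h i1) = min (\<phi> (e i1) (h i1)) (\<phi> (e i2) (h i1))" by (simp add: inf_nat_def)
    moreover have "\<phi> m (h i1) \<le> b' (h i1)" using mb by (simp add: le_fun_def)
    ultimately show False using h[OF i(1)] h[OF i(2)] eq by (simp add: min_def split: if_splits)
  qed
  moreover have "h ` ?S \<subseteq> ?T" using h by fastforce
  ultimately show ?thesis by (intro card_inj_on_le) auto
qed

lemma nmax_box_preimage_Sup_fin:
  assumes "g \<in> NN n" "box_preimage g a' b' \<noteq> {}"
  shows "int (nmax n' b' (\<phi> g)) + (int n - int n') \<le> int (nmax n (Sup_fin (box_preimage g a' b')) g)"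
proof -
  let ?P = "box_preimage g a' b'"
  from assms(1) Sup_fin_box_preimage_mem[OF assms(2)] have "card {i. i < n \<and> Sup_fin ?P i \<noteq> g i} \<le> card {j. j < n' \<and> b' j \<noteq> \<phi> g j}"
    by (rule card_free_coords_le) (rule Sup_fin.coboundedI[OF finite_box_preimage])
  then show ?thesis
    using nmax_add_card_neq[of n "Sup_fin ?P" g] nmax_add_card_neq[of n' b' "\<phi> g"] by linarith
qed

lemma box_preimage_cases:
  assumes g: "g \<in> NN n"
  obtains "box_preimage g a' b' = {}"
  | l u where "l \<in> NN n" "u \<in> NN n" "l \<le> u" "box_preimage g a' b' = intv n l u"
      "int (nmax n' b' (\<phi> g)) + (int n - int n') \<le> int (nmax n u g)"
proof (cases "box_preimage g a' b' = {}")
  case False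
  let ?P = "box_preimage g a' b'"
  have eq: "?P = intv n (Inf_fin ?P) (Sup_fin ?P)" using False by (rule box_preimage_eq_intv)
  from Inf_fin_box_preimage_mem[OF False] Sup_fin_box_preimage_mem[OF False]
  have "Inf_fin ?P \<in> NN n" "Sup_fin ?P \<in> NN n"
    unfolding box_preimage_def intv_def by blast+
  moreover have "Inf_fin ?P \<le> Sup_fin ?P" using finite_box_preimage False by (rule Inf_fin_le_Sup_fin)
  moreover have "int (nmax n' b' (\<phi> g)) + (int n - int n') \<le> int (nmax n (Sup_fin ?P) g)"
    using g False by (rule nmax_box_preimage_Sup_fin)
  ultimately show thesis using eq by (intro that(2)) blast+
qed (rule that(1))

lemma changes_sdepth:
  assumes g: "g \<in> NN n"
  shows "changes_sdepth n n' \<phi> (int n - int n') g (\<phi> g)"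
  unfolding changes_sdepth_def box_preimage_def[symmetric]
proof (intro conjI ballI impI order.refl)
  fix a' b'
  show "\<exists>D. finite D \<and> (\<forall>(a, b)\<in>D. a \<in> NN n \<and> b \<in> NN n \<and> a \<le> b) \<and>
    (\<forall>p\<in>D. \<forall>q\<in>D. p \<noteq> q \<longrightarrow> intv n (fst p) (snd p) \<inter> intv n (fst q) (snd q) = {}) \<and>
    box_preimage g a' b' = (\<Union>(a, b)\<in>D. intv n a b) \<and>
    (\<forall>(a, b)\<in>D. int (nmax n' b' (\<phi> g)) + (int n - int n') \<le> int (nmax n b g))"
  proof (cases rule: box_preimage_cases[OF g, where a'=a' and b'=b'])
    case 1
    then show ?thesis by (intro exI[of _ "{}"]) simp
  next
    case (2 l u)
    then show ?thesis by (intro exI[of _ "{(l, u)}"]) simp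
  qed
qed

end

theorem theorem3p7:
  fixes n n' :: nat and \<phi> :: "(nat \<Rightarrow> nat) \<Rightarrow> (nat \<Rightarrow> nat)" and g :: "nat \<Rightarrow> nat"
  assumes maps: "\<And>a. a \<in> NN n \<Longrightarrow> \<phi> a \<in> NN n'"
    and join: "\<And>a b. a \<in> NN n \<Longrightarrow> b \<in> NN n \<Longrightarrow> \<phi> (sup a b) = sup (\<phi> a) (\<phi> b)"
    and meet: "\<And>a b. a \<in> NN n \<Longrightarrow> b \<in> NN n \<Longrightarrow> \<phi> (inf a b) = inf (\<phi> a) (\<phi> b)"
    and g: "g \<in> NN n"
  shows "changes_sdepth n n' \<phi> (int n - int n') g (\<phi> g)"
proof -
  interpret lattice_hom_NN n n' \<phi> using maps join meet by unfold_locales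
  show ?thesis using g by (rule changes_sdepth)
qed

end
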